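(* Let $V,V'$ be finite-dimensional complex vector spaces, $G\subset GL(V)$ and $G'\subset GL(V')$ finite subgroups, and $F:V\to V'$ a holomorphic diffeomorphism which maps $G$-orbits bijectively onto $G'$-orbits. Then there is a unique group isomorphism $a:G\to G'$ such that $F\circ g=a(g)\circ F$ for every $g\in G$. In particular $a$ and $a^{-1}$ map complex reflections to complex reflections. *)

theory Defs
  imports "HOL-Analysis.Analysis"
begin

text \<open>Finite-dimensional complex vector spaces are modelled as complex^'n with 'n finite.\<close>

definition clinear :: "(complex^'n \<Rightarrow> complex^'m) \<Rightarrow> bool" where
  "clinear f \<longleftrightarrow> Vector_Spaces.linear ((*s) :: complex \<Rightarrow> _) ((*s) :: complex \<Rightarrow> _) f"

definition GL :: "(complex^'n \<Rightarrow> complex^'n) set" where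
  "GL = {f. clinear f \<and> bij f}"

definition finite_subgroup_GL :: "(complex^'n \<Rightarrow> complex^'n) set \<Rightarrow> bool" where
  "finite_subgroup_GL G \<longleftrightarrow> finite G \<and> G \<subseteq> GL \<and> id \<in> G \<and>
     (\<forall>g\<in>G. \<forall>h\<in>G. g \<circ> h \<in> G) \<and> (\<forall>g\<in>G. inv g \<in> G)"

text \<open>Holomorphic maps in several variables: complex (Frechet) differentiable everywhere,
  i.e. the real derivative is complex-linear at every point.\<close>
definition holomorphic_map :: "(complex^'n \<Rightarrow> complex^'m) \<Rightarrow> bool" where
  "holomorphic_map F \<longleftrightarrow> (\<forall>x. \<exists>L. clinear L \<and> (F has_derivative L) (at x))"

definition holomorphic_diffeo :: "(complex^'n \<Rightarrow> complex^'m) \<Rightarrow> bool" where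
  "holomorphic_diffeo F \<longleftrightarrow> bij F \<and> holomorphic_map F \<and> holomorphic_map (inv F)"

definition orbit :: "('a \<Rightarrow> 'a) set \<Rightarrow> 'a \<Rightarrow> 'a set" where
  "orbit G x = (\<lambda>g. g x) ` G"

definition complex_reflection :: "(complex^'n \<Rightarrow> complex^'n) \<Rightarrow> bool" where
  "complex_reflection g \<longleftrightarrow> g \<in> GL \<and> g \<noteq> id \<and> (\<exists>k>0. g ^^ k = id) \<and>
     vec.dim {v. g v = v} = CARD('n) - 1"

definition group_iso_on ::
  "(complex^'n \<Rightarrow> complex^'n) set \<Rightarrow> (complex^'m \<Rightarrow> complex^'m) set \<Rightarrow>
   ((complex^'n \<Rightarrow> complex^'n) \<Rightarrow> (complex^'m \<Rightarrow> complex^'m)) \<Rightarrow> bool" where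
  "group_iso_on G G' a \<longleftrightarrow> bij_betw a G G' \<and> (\<forall>g\<in>G. \<forall>h\<in>G. a (g \<circ> h) = a g \<circ> a h)"

end

theory Submission
  imports Defs "HOL-Complex_Analysis.Complex_Analysis"
begin

text \<open>Fix \<open>g \<in> G\<close>. Since \<open>F\<close> maps orbits to orbits, the closed sets \<open>{x. F (g x) = h (F x)}\<close>,
  \<open>h \<in> G'\<close>, cover the whole space; by Baire one of them has interior, and by the identity
  theorem (applied on complex lines) \<open>F \<circ> g = h \<circ> F\<close> everywhere. So conjugation by \<open>F\<close> maps
  \<open>G\<close> into \<open>G'\<close>, by symmetry onto it, and it is the only map intertwining \<open>F\<close>.
  Differentiating \<open>F \<circ> g = h \<circ> F\<close> at the common fixed point \<open>0\<close> shows that \<open>g\<close> and \<open>h\<close> are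
  conjugate by the linear isomorphism \<open>dF(0)\<close>, which preserves the order and the dimension of
  the fixed space; hence complex reflections correspond.\<close>

lemma clinear_imp_linear:
  fixes f :: "complex^'n \<Rightarrow> complex^'m"
  assumes "clinear f"
  shows "linear f"
proof -
  interpret f: Vector_Spaces.linear "(*s)" "(*s)" f
    using assms unfolding clinear_def .
  have scaleR: "r *\<^sub>R x = complex_of_real r *s x" for r and x :: "complex^'k"
    by (simp add: vec_eq_iff of_real_def)
  show ?thesis
    by (rule linearI) (simp_all add: f.add f.scale scaleR)
qed

lemma clinear_imp_bounded_linear: "clinear f \<Longrightarrow> bounded_linear f"
  using clinear_imp_linear linear_conv_bounded_linear by blast

lemma clinear_compose: "clinear f \<Longrightarrow> clinear g \<Longrightarrow> clinear (f \<circ> g)"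
  unfolding clinear_def using Vector_Spaces.linear_compose by blast

lemma clinear_imp_holomorphic_map: "clinear f \<Longrightarrow> holomorphic_map f"
  unfolding holomorphic_map_def
  using clinear_imp_bounded_linear bounded_linear_imp_has_derivative by blast

lemma holomorphic_map_compose:
  assumes "holomorphic_map f" "holomorphic_map g"
  shows "holomorphic_map (f \<circ> g)"
  unfolding holomorphic_map_def
proof
  fix x
  obtain Dg where Dg: "clinear Dg" "(g has_derivative Dg) (at x)"
    using assms(2) unfolding holomorphic_map_def by blast
  obtain Df where Df: "clinear Df" "(f has_derivative Df) (at (g x))"
    using assms(1) unfolding holomorphic_map_def by blast
  have "(f \<circ> g has_derivative Df \<circ> Dg) (at x)"
    using Dg(2) Df(2) by (rule diff_chain_at)
  then show "\<exists>L. clinear L \<and> (f \<circ> g has_derivative L) (at x)"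
    using clinear_compose[OF Df(1) Dg(1)] by blast
qed

lemma holomorphic_map_imp_continuous_on: "holomorphic_map f \<Longrightarrow> continuous_on S f"
  unfolding holomorphic_map_def
  by (meson continuous_at_imp_continuous_on has_derivative_continuous)

lemma has_derivative_complex_line:
  fixes x v :: "complex^'n"
  shows "((\<lambda>z. x + z *s v) has_derivative (\<lambda>h. h *s v)) (at z)"
proof -
  have "bounded_linear (\<lambda>h::complex. h *s v)"
    by (auto intro!: linearI simp: vec_eq_iff algebra_simps linear_conv_bounded_linear[symmetric])
  then show ?thesis
    by (auto intro!: derivative_eq_intros bounded_linear_imp_has_derivative)
qed

lemma holomorphic_map_restrict_line:
  fixes f :: "complex^'n \<Rightarrow> complex^'m"
  assumes "holomorphic_map f"
  shows "(\<lambda>z. f (x + z *s v) $ i) holomorphic_on UNIV"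
proof -
  have "((\<lambda>z. f (x + z *s v) $ i) has_field_derivative L v $ i) (at z)"
    if L: "clinear L" "(f has_derivative L) (at (x + z *s v))" for z L
  proof -
    interpret L: Vector_Spaces.linear "(*s)" "(*s)" L
      using L(1) unfolding clinear_def .
    have "(f \<circ> (\<lambda>z. x + z *s v) has_derivative L \<circ> (\<lambda>h. h *s v)) (at z)"
      using has_derivative_complex_line L(2) by (rule diff_chain_at)
    from bounded_linear.has_derivative[OF bounded_linear_vec_nth this, of i]
    have "((\<lambda>z. f (x + z *s v) $ i) has_derivative (\<lambda>h. h * L v $ i)) (at z)"
      by (simp add: o_def L.scale)
    then show ?thesis
      unfolding has_field_derivative_def by (simp add: mult_commute_abs)
  qed
  then show ?thesis
    using assms unfolding holomorphic_map_def holomorphic_on_def field_differentiable_def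
    by (metis field_differentiable_at_within field_differentiable_def)
qed

lemma holomorphic_map_eq_if_eq_on_open:
  fixes f g :: "complex^'n \<Rightarrow> complex^'m"
  assumes "holomorphic_map f" "holomorphic_map g"
    and "open S" "x \<in> S" "\<forall>y\<in>S. f y = g y"
  shows "f = g"
proof
  fix y
  define line where "line = (\<lambda>z::complex. x + z *s (y - x))"
  have "continuous_on UNIV line"
    unfolding line_def
    by (intro continuous_at_imp_continuous_on ballI has_derivative_continuous[OF has_derivative_complex_line])
  then have U: "open (line -` S)" "0 \<in> line -` S"
    using open_vimage[OF \<open>open S\<close>] \<open>x \<in> S\<close> by (auto simp: line_def)
  have hol: "(\<lambda>z. f (line z) $ i) holomorphic_on UNIV" "(\<lambda>z. g (line z) $ i) holomorphic_on UNIV" for i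
    using assms(1,2) holomorphic_map_restrict_line unfolding line_def by blast+
  have agree: "f (line z) $ i = g (line z) $ i" if "z \<in> line -` S" for z i
    using that assms(5) by simp
  have "f (line 1) $ i = g (line 1) $ i" for i
    using analytic_continuation_open[where f = "\<lambda>z. f (line z) $ i" and g = "\<lambda>z. g (line z) $ i",
        OF U(1) open_UNIV _ connected_UNIV subset_UNIV hol agree] U(2) by blast
  then show "f y = g y"
    by (simp add: vec_eq_iff line_def)
qed

lemma interior_finite_UN_closed_empty:
  assumes "finite I" "\<And>i. i \<in> I \<Longrightarrow> closed (A i)" "\<And>i. i \<in> I \<Longrightarrow> interior (A i) = {}"
  shows "interior (\<Union>i\<in>I. A i) = {}"
  using assms
proof (induction I rule: finite_induct)
  case (insert j I)
  then show ?case
    using interior_closed_Un_empty_interior[of "A j" "\<Union>i\<in>I. A i"] by simp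
qed simp

lemma holomorphic_intertwiner_from_pointwise:
  fixes f :: "complex^'n \<Rightarrow> complex^'m"
  assumes f: "holomorphic_map f" and g: "clinear g"
    and H: "finite H" "\<And>h. h \<in> H \<Longrightarrow> clinear h"
    and pointwise: "\<And>x. \<exists>h\<in>H. f (g x) = h (f x)"
  shows "\<exists>h\<in>H. f \<circ> g = h \<circ> f"
proof -
  have hol: "holomorphic_map (f \<circ> g)" "holomorphic_map (h \<circ> f)" if "h \<in> H" for h
    using f g H(2)[OF that] by (auto intro: holomorphic_map_compose clinear_imp_holomorphic_map)
  define A where "A h = {x. (f \<circ> g) x = (h \<circ> f) x}" for h
  have "closed (A h)" if "h \<in> H" for h
    unfolding A_def
    using hol[OF that] by (intro closed_Collect_eq continuous_on_id holomorphic_map_imp_continuous_on)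
  moreover have "(\<Union>h\<in>H. A h) = UNIV"
    using pointwise by (auto simp: A_def)
  ultimately obtain h where h: "h \<in> H" "interior (A h) \<noteq> {}"
    using interior_finite_UN_closed_empty[OF H(1), of A] by force
  then obtain x where "x \<in> interior (A h)"
    by blast
  then have "f \<circ> g = h \<circ> f"
    by (intro holomorphic_map_eq_if_eq_on_open[OF hol[OF h(1)] open_interior])
      (auto simp: A_def dest: interior_subset[THEN subsetD])
  with h(1) show ?thesis
    by blast
qed

lemma intertwines_funpow: "f \<circ> g = h \<circ> f \<Longrightarrow> f \<circ> g ^^ k = h ^^ k \<circ> f"
  by (induction k) (simp_all add: fun_eq_iff)

lemma intertwines_fixpoints:
  assumes "bij f" "f \<circ> g = h \<circ> f"
  shows "f ` {x. g x = x} = {y. h y = y}"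
proof
  show "f ` {x. g x = x} \<subseteq> {y. h y = y}"
  proof (rule image_subsetI)
    fix x
    assume "x \<in> {x. g x = x}"
    moreover have "f (g x) = h (f x)"
      using assms(2) by (rule comp_eq_dest)
    ultimately show "f x \<in> {y. h y = y}"
      unfolding mem_Collect_eq by argo
  qed
  show "{y. h y = y} \<subseteq> f ` {x. g x = x}"
  proof
    fix y
    assume "y \<in> {y. h y = y}"
    have y: "f (inv f y) = y"
      using assms(1) by (simp add: bij_is_surj surj_f_inv_f)
    have "f (g (inv f y)) = h (f (inv f y))"
      using assms(2) by (rule comp_eq_dest)
    also have "\<dots> = f (inv f y)"
      using \<open>y \<in> {y. h y = y}\<close> y by simp
    finally have "f (g (inv f y)) = f (inv f y)" .
    then have "g (inv f y) = inv f y"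
      using assms(1) by (simp add: bij_is_inj inj_eq)
    then have "inv f y \<in> {x. g x = x}"
      by simp
    then show "y \<in> f ` {x. g x = x}"
      using y[symmetric] by (rule rev_image_eqI)
  qed
qed

lemma intertwines_id_iff:
  assumes "bij f" "f \<circ> g = h \<circ> f"
  shows "g = id \<longleftrightarrow> h = id"
proof -
  have "g = id \<longleftrightarrow> {x. g x = x} = UNIV" "h = id \<longleftrightarrow> {y. h y = y} = UNIV"
    by (auto simp: fun_eq_iff)
  moreover have "{x. g x = x} = UNIV \<longleftrightarrow> f ` {x. g x = x} = f ` UNIV"
    using bij_is_inj[OF assms(1)] by (simp add: inj_image_eq_iff)
  moreover have "f ` UNIV = UNIV"
    using assms(1) by (simp add: bij_is_surj)
  ultimately show ?thesis
    using intertwines_fixpoints[OF assms] by simp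
qed

lemma intertwines_iff_conj:
  assumes "bij f"
  shows "f \<circ> g = h \<circ> f \<longleftrightarrow> h = f \<circ> g \<circ> inv f"
  using assms by (auto simp: fun_eq_iff bij_def surj_f_inv_f)

lemma has_derivative_intertwines:
  fixes f :: "'a::real_normed_vector \<Rightarrow> 'b::real_normed_vector"
  assumes f: "(f has_derivative D) (at 0)" and g: "bounded_linear g" and h: "bounded_linear h"
    and fgh: "f \<circ> g = h \<circ> f"
  shows "D \<circ> g = h \<circ> D"
proof -
  have "g 0 = 0"
    using g by (simp add: bounded_linear.linear linear_0)
  with f have "(f \<circ> g has_derivative D \<circ> g) (at 0)"
    using bounded_linear_imp_has_derivative[OF g] by (metis diff_chain_at)
  moreover have "(h \<circ> f has_derivative h \<circ> D) (at 0)"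
    using f bounded_linear_imp_has_derivative[OF h] by (rule diff_chain_at)
  ultimately show ?thesis
    using fgh has_derivative_unique by metis
qed

lemma holomorphic_diffeo_has_derivative_bij:
  fixes f :: "complex^'n \<Rightarrow> complex^'m"
  assumes "holomorphic_diffeo f"
  obtains D where "clinear D" "bij D" "(f has_derivative D) (at x)"
proof -
  have f: "bij f" "holomorphic_map f" "holomorphic_map (inv f)"
    using assms unfolding holomorphic_diffeo_def by auto
  obtain D where D: "clinear D" "(f has_derivative D) (at x)"
    using f(2) unfolding holomorphic_map_def by blast
  obtain E where E: "clinear E" "(inv f has_derivative E) (at (f x))"
    using f(3) unfolding holomorphic_map_def by blast
  have "(inv f \<circ> f has_derivative E \<circ> D) (at x)"
    using D(2) E(2) by (rule diff_chain_at)
  then have ED: "E \<circ> D = id"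
    using f(1) has_derivative_id has_derivative_unique by (metis bij_is_inj inv_o_cancel id_def)
  have "(f \<circ> inv f has_derivative D \<circ> E) (at (f x))"
    using E(2) D(2) f(1) by (metis bij_inv_eq_iff diff_chain_at)
  then have DE: "D \<circ> E = id"
    using f(1) has_derivative_id has_derivative_unique by (metis bij_is_surj surj_iff id_def)
  show ?thesis
    by (rule that[OF D(1) o_bij[OF ED DE] D(2)])
qed

lemma clinear_inj_dim_image:
  fixes f :: "complex^'n \<Rightarrow> complex^'m"
  assumes "clinear f" "inj f"
  shows "vec.dim (f ` S) = vec.dim S"
  using assms unfolding clinear_def by (intro vec.dim_image_eq) (auto intro: inj_on_subset)

lemma clinear_bij_imp_CARD_eq:
  fixes f :: "complex^'n \<Rightarrow> complex^'m"
  assumes "clinear f" "bij f"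
  shows "CARD('n) = CARD('m)"
  using clinear_inj_dim_image[OF assms(1) bij_is_inj[OF assms(2)], of UNIV] assms(2)
  by (simp add: bij_is_surj card_cart_basis)

lemma complex_reflection_conj_iff:
  fixes D :: "complex^'n \<Rightarrow> complex^'m"
  assumes D: "clinear D" "bij D" and "g \<in> GL" "h \<in> GL" and gh: "D \<circ> g = h \<circ> D"
  shows "complex_reflection g \<longleftrightarrow> complex_reflection h"
proof -
  have "(\<exists>k>0. g ^^ k = id) \<longleftrightarrow> (\<exists>k>0. h ^^ k = id)"
    using intertwines_id_iff[OF D(2) intertwines_funpow[OF gh]] by blast
  moreover have "vec.dim {v. g v = v} = vec.dim {v. h v = v}"
    using clinear_inj_dim_image[OF D(1) bij_is_inj[OF D(2)]] intertwines_fixpoints[OF D(2) gh]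
    by metis
  ultimately show ?thesis
    using assms(3,4) intertwines_id_iff[OF D(2) gh] clinear_bij_imp_CARD_eq[OF D]
    unfolding complex_reflection_def by argo
qed

lemma complex_reflection_intertwined_iff:
  fixes f :: "complex^'n \<Rightarrow> complex^'m"
  assumes f: "holomorphic_diffeo f" and g: "g \<in> GL" and h: "h \<in> GL" and fgh: "f \<circ> g = h \<circ> f"
  shows "complex_reflection g \<longleftrightarrow> complex_reflection h"
proof -
  obtain D where D: "clinear D" "bij D" "(f has_derivative D) (at 0)"
    using holomorphic_diffeo_has_derivative_bij[OF f] .
  have "D \<circ> g = h \<circ> D"
    using g h by (intro has_derivative_intertwines[OF D(3) _ _ fgh])
      (auto simp: GL_def clinear_imp_bounded_linear)
  with D(1,2) g h show ?thesis
    by (rule complex_reflection_conj_iff)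
qed

lemma orbit_map_inv:
  assumes "bij F" "\<forall>x. F ` orbit G x = orbit G' (F x)"
  shows "\<forall>y. inv F ` orbit G' y = orbit G (inv F y)"
proof
  fix y
  have "F (inv F y) = y"
    using assms(1) by (simp add: bij_is_surj surj_f_inv_f)
  then have "orbit G' y = F ` orbit G (inv F y)"
    using assms(2) by simp
  then show "inv F ` orbit G' y = orbit G (inv F y)"
    using assms(1) by (simp add: image_image bij_is_inj)
qed

lemma orbit_map_conj_mem:
  fixes F :: "complex^'n \<Rightarrow> complex^'m"
  assumes G: "finite_subgroup_GL G" and G': "finite_subgroup_GL G'"
    and F: "holomorphic_map F" "bij F" and orbits: "\<forall>x. F ` orbit G x = orbit G' (F x)"
    and g: "g \<in> G"
  shows "F \<circ> g \<circ> inv F \<in> G'"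
proof -
  have "clinear g" "finite G'" "\<And>h. h \<in> G' \<Longrightarrow> clinear h"
    using G G' g by (auto simp: finite_subgroup_GL_def GL_def)
  moreover have "\<exists>h\<in>G'. F (g x) = h (F x)" for x
  proof -
    have "F (g x) \<in> F ` orbit G x"
      using g by (simp add: orbit_def)
    then have "F (g x) \<in> orbit G' (F x)"
      using orbits by simp
    then show ?thesis
      by (auto simp: orbit_def)
  qed
  ultimately obtain h where "h \<in> G'" "F \<circ> g = h \<circ> F"
    using holomorphic_intertwiner_from_pointwise[OF F(1)] by blast
  then show ?thesis
    using intertwines_iff_conj[OF F(2)] by simp
qed

lemma conj_group_iso_on:
  assumes F: "bij F" and G: "\<forall>g\<in>G. \<forall>k\<in>G. g \<circ> k \<in> G"
    and GG': "\<forall>g\<in>G. F \<circ> g \<circ> inv F \<in> G'" and G'G: "\<forall>h\<in>G'. inv F \<circ> h \<circ> F \<in> G"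
  shows "group_iso_on G G' (\<lambda>g\<in>G. F \<circ> g \<circ> inv F)"
proof -
  have inv: "inv F (F x) = x" "F (inv F y) = y" for x y
    using F by (simp_all add: bij_is_inj bij_is_surj surj_f_inv_f)
  have "bij_betw (\<lambda>g\<in>G. F \<circ> g \<circ> inv F) G G'"
    by (rule bij_betw_byWitness[where f' = "\<lambda>h. inv F \<circ> h \<circ> F"])
      (use GG' G'G in \<open>auto simp: fun_eq_iff inv\<close>)
  moreover have "F \<circ> (g \<circ> k) \<circ> inv F = (F \<circ> g \<circ> inv F) \<circ> (F \<circ> k \<circ> inv F)" for g k
    by (simp add: fun_eq_iff inv)
  ultimately show ?thesis
    using G unfolding group_iso_on_def by simp
qed

lemma orbit_map_conj_group_iso:
  fixes F :: "complex^'n \<Rightarrow> complex^'m"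
  assumes G: "finite_subgroup_GL G" and G': "finite_subgroup_GL G'"
    and F: "holomorphic_diffeo F" and orbits: "\<forall>x. F ` orbit G x = orbit G' (F x)"
  shows "(\<lambda>g\<in>G. F \<circ> g \<circ> inv F) \<in> G \<rightarrow>\<^sub>E G'" "group_iso_on G G' (\<lambda>g\<in>G. F \<circ> g \<circ> inv F)"
proof -
  have F': "bij F" "holomorphic_map F" "holomorphic_map (inv F)"
    using F unfolding holomorphic_diffeo_def by auto
  have GG': "\<forall>g\<in>G. F \<circ> g \<circ> inv F \<in> G'"
    using orbit_map_conj_mem[OF G G' F'(2,1) orbits] by blast
  have "\<forall>h\<in>G'. inv F \<circ> h \<circ> inv (inv F) \<in> G"
    using orbit_map_conj_mem[OF G' G F'(3) bij_imp_bij_inv[OF F'(1)] orbit_map_inv[OF F'(1) orbits]]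
    by blast
  then have G'G: "\<forall>h\<in>G'. inv F \<circ> h \<circ> F \<in> G"
    by (simp add: inv_inv_eq F'(1))
  show "(\<lambda>g\<in>G. F \<circ> g \<circ> inv F) \<in> G \<rightarrow>\<^sub>E G'"
    using GG' by simp
  show "group_iso_on G G' (\<lambda>g\<in>G. F \<circ> g \<circ> inv F)"
    using G by (intro conj_group_iso_on[OF F'(1) _ GG' G'G]) (simp add: finite_subgroup_GL_def)
qed

theorem lemma5p1:
  fixes G :: "(complex^'n \<Rightarrow> complex^'n) set"
    and G' :: "(complex^'m \<Rightarrow> complex^'m) set"
    and F :: "complex^'n \<Rightarrow> complex^'m"
  assumes "finite_subgroup_GL G" and "finite_subgroup_GL G'"
    and "holomorphic_diffeo F"
    and "\<forall>x. F ` orbit G x = orbit G' (F x)"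
  shows "(\<exists>!a. a \<in> G \<rightarrow>\<^sub>E G' \<and> group_iso_on G G' a \<and> (\<forall>g\<in>G. F \<circ> g = a g \<circ> F))
    \<and> (\<forall>a. a \<in> G \<rightarrow>\<^sub>E G' \<and> group_iso_on G G' a \<and> (\<forall>g\<in>G. F \<circ> g = a g \<circ> F) \<longrightarrow>
         (\<forall>g\<in>G. complex_reflection g \<longleftrightarrow> complex_reflection (a g)))"
proof -
  have "bij F"
    using assms(3) by (simp add: holomorphic_diffeo_def)
  define a where "a = (\<lambda>g\<in>G. F \<circ> g \<circ> inv F)"
  have a: "a \<in> G \<rightarrow>\<^sub>E G'" "group_iso_on G G' a"
    using orbit_map_conj_group_iso[OF assms] by (simp_all only: a_def)
  have intertwines_iff: "F \<circ> g = b g \<circ> F \<longleftrightarrow> b g = a g" if "g \<in> G" for b g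
    using intertwines_iff_conj[OF \<open>bij F\<close>, of g "b g"] that by (simp add: a_def)
  have unique: "b = a" if "b \<in> G \<rightarrow>\<^sub>E G'" "\<forall>g\<in>G. F \<circ> g = b g \<circ> F" for b
    by (rule PiE_ext[OF that(1) a(1)]) (use that(2) intertwines_iff in simp)
  show ?thesis
  proof (intro conjI allI impI ballI)
    have "\<forall>g\<in>G. F \<circ> g = a g \<circ> F"
      using intertwines_iff[of _ a] by simp
    with a show "\<exists>!a. a \<in> G \<rightarrow>\<^sub>E G' \<and> group_iso_on G G' a \<and> (\<forall>g\<in>G. F \<circ> g = a g \<circ> F)"
      using unique by (intro ex1I[of _ a]) blast+
  next
    fix b g
    assume b: "b \<in> G \<rightarrow>\<^sub>E G' \<and> group_iso_on G G' b \<and> (\<forall>g\<in>G. F \<circ> g = b g \<circ> F)" and "g \<in> G"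
    then have "g \<in> GL" "b g \<in> GL" "F \<circ> g = b g \<circ> F"
      using assms(1,2) by (auto simp: finite_subgroup_GL_def)
    then show "complex_reflection g \<longleftrightarrow> complex_reflection (b g)"
      by (rule complex_reflection_intertwined_iff[OF assms(3)])
  qed
qed

end
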